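(* Let $\mathbf T$ be a countable homogeneous tournament and $\mathbf T^*$ an expansion of $\mathbf T$ as described in the context, and assume that $\mathrm{Age}(\mathbf T^* )$ has the Ramsey property. Then for every positive integer $n$, the class $\mathrm{Age}(\mathbf T[I_n]^* )$ has the Ramsey property.
   Context: For relational structures $\mathbf A,\mathbf B$ in the same language, $\binom{\mathbf B}{\mathbf A}$ denotes the set of substructures of $\mathbf B$ isomorphic to $\mathbf A$. For $k\ge 1$, $\mathbf C\to(\mathbf B)^{\mathbf A}_k$ means: for every map $c:\binom{\mathbf C}{\mathbf A}\to[k]=\{0,\dots,k-1\}$ there is $\mathbf B'\in\binom{\mathbf C}{\mathbf B}$ such that $c$ is constant on $\binom{\mathbf B'}{\mathbf A}$. A class $\mathcal K$ of finite structures has the Ramsey property if for all $k\ge1$ and all $\mathbf A,\mathbf B\in\mathcal K$ there is $\mathbf C\in\mathcal K$ with $\mathbf C\to(\mathbf B)^{\mathbf A}_k$. The age $\mathrm{Age}(\mathbf F)$ of a structure $\mathbf F$ is the class of finite structures embeddable in $\mathbf F$. A tournament is a directed graph in which every pair of distinct vertices carries exactly one directed edge; it is homogeneous if every isomorphism between finite substructures extends to an automorphism. $\mathbf T=(T,E^{\mathbf T})$ is a countable homogeneous tournament, and $\mathbf T^*$ is an expansion of $\mathbf T$ to a countable relational language $L_{\mathbf T^*}\supseteq\{E,<\}$ in which $<$ is interpreted as a linear order $<^*$ on $T$. For a positive integer $n$, $[n]=\{0,\dots,n-1\}$. The structure $\mathbf T[I_n]^*$ has universe $T\times[n]$ and language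 $L_{\mathbf T^*}\cup\{L_0,\dots,L_{n-1}\}$ ($L_i$ new unary symbols), interpreted as follows: $E((x,i),(y,j))$ iff $E^{\mathbf T}(x,y)$; for each $m$-ary $R\in L_{\mathbf T^*}\setminus\{E,<\}$, $R((x_1,i_1),\dots,(x_m,i_m))$ iff $R^{\mathbf T^*}(x_1,\dots,x_m)$; $(x,i)<(y,j)$ iff $x<^*y$, or $x=y$ and $i<j$; and $L_i(x,j)$ iff $j=i$. *)

theory Defs
  imports Main "HOL-Library.Countable_Set"
begin

type_synonym ('a, 's) struct = "'a set \<times> ('s \<Rightarrow> 'a list \<Rightarrow> bool)"

definition wf_struct :: "('s \<Rightarrow> nat) \<Rightarrow> ('a, 's) struct \<Rightarrow> bool" where
  "wf_struct ar A \<longleftrightarrow> (\<forall>s xs. snd A s xs \<longrightarrow> length xs = ar s \<and> set xs \<subseteq> fst A)"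

definition preserves :: "('s \<Rightarrow> nat) \<Rightarrow> ('a, 's) struct \<Rightarrow> ('b, 's) struct \<Rightarrow> ('a \<Rightarrow> 'b) \<Rightarrow> bool" where
  "preserves ar A B f \<longleftrightarrow>
     (\<forall>s xs. set xs \<subseteq> fst A \<and> length xs = ar s \<longrightarrow> (snd A s xs \<longleftrightarrow> snd B s (map f xs)))"

definition embedding :: "('s \<Rightarrow> nat) \<Rightarrow> ('a, 's) struct \<Rightarrow> ('b, 's) struct \<Rightarrow> ('a \<Rightarrow> 'b) \<Rightarrow> bool" where
  "embedding ar A B f \<longleftrightarrow> inj_on f (fst A) \<and> f ` fst A \<subseteq> fst B \<and> preserves ar A B f"

definition isomorphic :: "('s \<Rightarrow> nat) \<Rightarrow> ('a, 's) struct \<Rightarrow> ('b, 's) struct \<Rightarrow> bool" where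
  "isomorphic ar A B \<longleftrightarrow> (\<exists>f. bij_betw f (fst A) (fst B) \<and> preserves ar A B f)"

definition induced :: "('a, 's) struct \<Rightarrow> 'a set \<Rightarrow> ('a, 's) struct" where
  "induced C X = (X, \<lambda>s xs. snd C s xs \<and> set xs \<subseteq> X)"

text \<open>The set of substructures of C isomorphic to A (a substructure is identified with
  its universe, as substructures are induced).\<close>
definition copies :: "('s \<Rightarrow> nat) \<Rightarrow> ('a, 's) struct \<Rightarrow> ('b, 's) struct \<Rightarrow> 'a set set" where
  "copies ar C A = {X. X \<subseteq> fst C \<and> isomorphic ar (induced C X) A}"

definition arrows :: "('s \<Rightarrow> nat) \<Rightarrow> ('a, 's) struct \<Rightarrow> ('b, 's) struct \<Rightarrow> ('b, 's) struct \<Rightarrow> nat \<Rightarrow> bool" where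
  "arrows ar C B A k \<longleftrightarrow>
     (\<forall>c :: 'a set \<Rightarrow> nat. c ` copies ar C A \<subseteq> {..<k} \<longrightarrow>
        (\<exists>Y \<in> copies ar C B. \<exists>i. \<forall>X \<in> copies ar C A. X \<subseteq> Y \<longrightarrow> c X = i))"

definition ramsey_class :: "('s \<Rightarrow> nat) \<Rightarrow> ('a, 's) struct set \<Rightarrow> bool" where
  "ramsey_class ar K \<longleftrightarrow>
     (\<forall>k \<ge> 1. \<forall>A \<in> K. \<forall>B \<in> K. \<exists>C \<in> K. arrows ar C B A k)"

text \<open>The age of F: all finite structures embeddable in F; every finite structure is
  isomorphic to one whose universe is a finite set of naturals, so we represent the age by
  those.\<close>
definition age :: "('s \<Rightarrow> nat) \<Rightarrow> ('b, 's) struct \<Rightarrow> (nat, 's) struct set" where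
  "age ar F = {A. finite (fst A) \<and> wf_struct ar A \<and> (\<exists>f. embedding ar A F f)}"

definition tournament :: "'a set \<Rightarrow> ('a \<Rightarrow> 'a \<Rightarrow> bool) \<Rightarrow> bool" where
  "tournament T E \<longleftrightarrow> (\<forall>x\<in>T. \<not> E x x) \<and>
     (\<forall>x\<in>T. \<forall>y\<in>T. x \<noteq> y \<longrightarrow> (E x y \<longleftrightarrow> \<not> E y x))"

definition homogeneous_digraph :: "'a set \<Rightarrow> ('a \<Rightarrow> 'a \<Rightarrow> bool) \<Rightarrow> bool" where
  "homogeneous_digraph T E \<longleftrightarrow>
     (\<forall>X Y f. finite X \<and> X \<subseteq> T \<and> Y \<subseteq> T \<and> bij_betw f X Y \<and>
        (\<forall>x\<in>X. \<forall>y\<in>X. E x y \<longleftrightarrow> E (f x) (f y)) \<longrightarrow>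
        (\<exists>g. bij_betw g T T \<and> (\<forall>x\<in>T. \<forall>y\<in>T. E x y \<longleftrightarrow> E (g x) (g y)) \<and>
             (\<forall>x\<in>X. g x = f x)))"

definition countable_homogeneous_tournament :: "'a set \<Rightarrow> ('a \<Rightarrow> 'a \<Rightarrow> bool) \<Rightarrow> bool" where
  "countable_homogeneous_tournament T E \<longleftrightarrow>
     countable T \<and> tournament T E \<and> homogeneous_digraph T E"

definition is_expansion :: "('s \<Rightarrow> nat) \<Rightarrow> 's \<Rightarrow> 's \<Rightarrow> 'a set \<Rightarrow> ('a \<Rightarrow> 'a \<Rightarrow> bool)
    \<Rightarrow> ('a, 's) struct \<Rightarrow> bool" where
  "is_expansion ar E0 Lt T E Tstar \<longleftrightarrow>
     wf_struct ar Tstar \<and> fst Tstar = T \<and> E0 \<noteq> Lt \<and> ar E0 = 2 \<and> ar Lt = 2 \<and>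
     (\<forall>x\<in>T. \<forall>y\<in>T. snd Tstar E0 [x, y] \<longleftrightarrow> E x y) \<and>
     strict_linear_order_on T {(x, y). snd Tstar Lt [x, y]}"

text \<open>The language of T[I_n]^*: old symbols Inl s, new unary symbols L_i = Inr i.\<close>
fun blowup_ar :: "('s \<Rightarrow> nat) \<Rightarrow> 's + nat \<Rightarrow> nat" where
  "blowup_ar ar (Inl s) = ar s"
| "blowup_ar ar (Inr i) = 1"

definition blowup :: "('s \<Rightarrow> nat) \<Rightarrow> 's \<Rightarrow> 's \<Rightarrow> ('a, 's) struct \<Rightarrow> nat
    \<Rightarrow> ('a \<times> nat, 's + nat) struct" where
  "blowup ar E0 Lt Tstar n =
     (fst Tstar \<times> {..<n},
      \<lambda>s xs. set xs \<subseteq> fst Tstar \<times> {..<n} \<and>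
        (case s of
           Inl r \<Rightarrow> length xs = ar r \<and>
             (if r = Lt then
                (case xs of [(x, i), (y, j)] \<Rightarrow> snd Tstar Lt [x, y] \<or> (x = y \<and> i < j)
                          | _ \<Rightarrow> False)
              else snd Tstar r (map fst xs))
         | Inr i \<Rightarrow> (case xs of [(x, j)] \<Rightarrow> j = i | _ \<Rightarrow> False)))"

end

theory Submission
  imports Defs
begin

text \<open>Every isomorphism between finite substructures X, Y of T[I_n]^* has the form
  (x, i) \<mapsto> (h x, i), where h is an isomorphism between the projections of X and Y in T^*:
  the unary predicates L_i fix the second coordinate, and as T is a tournament two points lie in
  the same fibre exactly when no edge joins them. Conversely every such h lifts. Since T^* is
  linearly ordered, its finite substructures are rigid, so a copy of a finite A' inside
  D \<times> [n] is determined by its projection, and projection is a bijection from these copies onto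
  the copies in D of the projection A of A'. Hence if D \<rightarrow> (B)^A_k in T^*, where B is the
  projection of B', then D \<times> [n] \<rightarrow> (B')^A'_k: a colouring of the copies of A' induces one of
  the copies of A, and a monochromatic copy of B in D lifts to a monochromatic copy of B'.\<close>

lemma fst_induced [simp]: "fst (induced C X) = X"
  by (simp add: induced_def)

lemma snd_induced [simp]: "snd (induced C X) s xs \<longleftrightarrow> snd C s xs \<and> set xs \<subseteq> X"
  by (simp add: induced_def)

lemma induced_induced: "X \<subseteq> D \<Longrightarrow> induced (induced C D) X = induced C X"
  unfolding induced_def by (auto simp: fun_eq_iff)

lemma preserves_induced_iff:
  assumes "f ` X \<subseteq> Y"
  shows "preserves ar (induced C X) (induced D Y) f \<longleftrightarrow>
    (\<forall>s xs. set xs \<subseteq> X \<and> length xs = ar s \<longrightarrow> (snd C s xs \<longleftrightarrow> snd D s (map f xs)))"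
proof -
  have "f ` set xs \<subseteq> Y" if "set xs \<subseteq> X" for xs using assms that by blast
  then show ?thesis unfolding preserves_def by auto
qed

lemma preserves_cong:
  assumes "\<And>x. x \<in> fst A \<Longrightarrow> f x = g x"
  shows "preserves ar A B f \<longleftrightarrow> preserves ar A B g"
proof -
  have "map f xs = map g xs" if "set xs \<subseteq> fst A" for xs
    using assms that by (auto intro: map_cong)
  then show ?thesis unfolding preserves_def by metis
qed

lemma isomorphic_sym:
  assumes "isomorphic ar A B" shows "isomorphic ar B A"
proof -
  obtain f where f: "bij_betw f (fst A) (fst B)" "preserves ar A B f"
    using assms unfolding isomorphic_def by blast
  let ?g = "inv_into (fst A) f"
  have g: "bij_betw ?g (fst B) (fst A)" using f(1) by (rule bij_betw_inv_into)
  have "snd B s ys \<longleftrightarrow> snd A s (map ?g ys)" if "set ys \<subseteq> fst B" "length ys = ar s" for s ys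
  proof -
    have "set (map ?g ys) \<subseteq> fst A" using that g by (auto simp: bij_betw_def)
    moreover have "map f (map ?g ys) = ys"
      using that f(1) by (auto simp: bij_betw_def f_inv_into_f intro!: map_idI)
    ultimately show ?thesis using f(2) that unfolding preserves_def by (metis length_map)
  qed
  with g show ?thesis unfolding isomorphic_def preserves_def by blast
qed

lemma isomorphic_trans:
  assumes "isomorphic ar A B" "isomorphic ar B C" shows "isomorphic ar A C"
proof -
  obtain f where f: "bij_betw f (fst A) (fst B)" "preserves ar A B f"
    using assms unfolding isomorphic_def by blast
  obtain g where g: "bij_betw g (fst B) (fst C)" "preserves ar B C g"
    using assms unfolding isomorphic_def by blast
  have "snd A s xs \<longleftrightarrow> snd C s (map (g \<circ> f) xs)" if "set xs \<subseteq> fst A" "length xs = ar s" for s xs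
  proof -
    have "set (map f xs) \<subseteq> fst B" using that f(1) by (auto simp: bij_betw_def)
    then show ?thesis using f(2) g(2) that unfolding preserves_def by (metis length_map map_map)
  qed
  moreover have "bij_betw (g \<circ> f) (fst A) (fst C)" using f(1) g(1) by (rule bij_betw_trans)
  ultimately show ?thesis unfolding isomorphic_def preserves_def by blast
qed

lemma embedding_imp_isomorphic_induced:
  "embedding ar A C f \<Longrightarrow> isomorphic ar A (induced C (f ` fst A))"
  unfolding embedding_def isomorphic_def preserves_def by (auto simp: bij_betw_def)

lemma isomorphic_induced_image:
  assumes "bij_betw g (fst C) (fst D)" "preserves ar C D g" "X \<subseteq> fst C"
  shows "isomorphic ar (induced C X) (induced D (g ` X))"
proof -
  have "preserves ar (induced C X) (induced D (g ` X)) g"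
    using assms(2,3) by (subst preserves_induced_iff) (auto simp: preserves_def)
  moreover have "bij_betw g X (g ` X)"
    using assms(1,3) by (auto simp: bij_betw_def intro: inj_on_subset)
  ultimately show ?thesis unfolding isomorphic_def by auto
qed

lemma copies_induced:
  "copies ar (induced C D) A = {X. X \<subseteq> D \<and> isomorphic ar (induced C X) A}"
  unfolding copies_def by (auto simp: induced_induced)

lemma copies_isomorphic_eq:
  "isomorphic ar A A' \<Longrightarrow> copies ar C A = copies ar C A'"
  unfolding copies_def by (meson isomorphic_sym isomorphic_trans)

lemma arrows_isomorphic_cong:
  "isomorphic ar A A' \<Longrightarrow> isomorphic ar B B' \<Longrightarrow> arrows ar C B A k \<longleftrightarrow> arrows ar C B' A' k"
  unfolding arrows_def by (simp add: copies_isomorphic_eq)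

lemma arrows_transfer:
  fixes p :: "'b \<Rightarrow> 'a"
  assumes arr: "arrows ar C B A k"
    and proj: "\<And>X. X \<in> copies ar' C' A' \<Longrightarrow> p ` X \<in> copies ar C A"
    and proj_inj: "\<And>X X'. X \<in> copies ar' C' A' \<Longrightarrow> X' \<in> copies ar' C' A' \<Longrightarrow>
        p ` X = p ` X' \<Longrightarrow> X = X'"
    and lift_A: "\<And>Z. Z \<in> copies ar C A \<Longrightarrow> \<exists>X \<in> copies ar' C' A'. p ` X = Z"
    and lift_B: "\<And>Y. Y \<in> copies ar C B \<Longrightarrow> \<exists>W \<in> copies ar' C' B'. p ` W \<subseteq> Y"
  shows "arrows ar' C' B' A' k"
  unfolding arrows_def
proof (intro allI impI)
  fix c' :: "'b set \<Rightarrow> nat" assume c': "c' ` copies ar' C' A' \<subseteq> {..<k}"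
  \<comment> \<open>colour each copy of A by the colour of the unique copy of A' lying over it\<close>
  define lift where "lift Z = (THE X. X \<in> copies ar' C' A' \<and> p ` X = Z)" for Z
  have lift_proj: "lift (p ` X) = X" if "X \<in> copies ar' C' A'" for X
    unfolding lift_def using that proj_inj by (intro the_equality) auto
  have "(c' \<circ> lift) ` copies ar C A \<subseteq> {..<k}"
    using c' lift_A lift_proj by fastforce
  then obtain Y i where Y: "Y \<in> copies ar C B"
    and monochromatic: "\<forall>Z \<in> copies ar C A. Z \<subseteq> Y \<longrightarrow> c' (lift Z) = i"
    using arr unfolding arrows_def by (metis comp_apply)
  obtain W where W: "W \<in> copies ar' C' B'" "p ` W \<subseteq> Y" using lift_B[OF Y] by blast
  have "c' X = i" if "X \<in> copies ar' C' A'" "X \<subseteq> W" for X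
    using monochromatic proj[OF that(1)] lift_proj[OF that(1)] that(2) W(2)
    by (metis image_mono order_trans)
  with W(1) show "\<exists>Y\<in>copies ar' C' B'. \<exists>i. \<forall>X\<in>copies ar' C' A'. X \<subseteq> Y \<longrightarrow> c' X = i"
    by blast
qed

lemma copies_image_iff:
  assumes g: "bij_betw g (fst C) (fst D)" "preserves ar C D g" and X: "X \<subseteq> fst C"
  shows "g ` X \<in> copies ar D A \<longleftrightarrow> X \<in> copies ar C A"
proof -
  have "isomorphic ar (induced C X) (induced D (g ` X))" by (rule isomorphic_induced_image[OF g X])
  moreover have "g ` X \<subseteq> fst D" using g(1) X by (auto simp: bij_betw_def)
  ultimately show ?thesis
    using X unfolding copies_def mem_Collect_eq by (meson isomorphic_sym isomorphic_trans)
qed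

lemma arrows_isomorphic:
  assumes iso: "isomorphic ar C D" and arr: "arrows ar D B A k"
  shows "arrows ar C B A k"
proof -
  obtain g where g: "bij_betw g (fst C) (fst D)" "preserves ar C D g"
    using iso unfolding isomorphic_def by blast
  have sub: "X \<subseteq> fst C" if "X \<in> copies ar C A'" for X A' using that by (simp add: copies_def)
  have lift: "\<exists>X \<in> copies ar C A'. g ` X = Z" if "Z \<in> copies ar D A'" for Z A'
  proof -
    have "Z \<subseteq> g ` fst C" using that g(1) by (auto simp: copies_def bij_betw_def)
    then obtain X where "X \<subseteq> fst C" "Z = g ` X" by (auto simp: subset_image_iff)
    then show ?thesis using that copies_image_iff[OF g] by blast
  qed
  show ?thesis
  proof (rule arrows_transfer[OF arr, where p = g])
    show "g ` X \<in> copies ar D A" if "X \<in> copies ar C A" for X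
      using that sub copies_image_iff[OF g] by blast
    show "X = X'" if "X \<in> copies ar C A" "X' \<in> copies ar C A" "g ` X = g ` X'" for X X'
      using that sub g(1) by (meson bij_betw_def inj_on_image_eq_iff)
    show "\<exists>X \<in> copies ar C A. g ` X = Z" if "Z \<in> copies ar D A" for Z
      using lift[OF that] .
    show "\<exists>W \<in> copies ar C B. g ` W \<subseteq> Y" if "Y \<in> copies ar D B" for Y
      using lift[OF that] by blast
  qed
qed

lemma age_isomorphic_induced:
  assumes "A \<in> age ar F"
  obtains Y where "finite Y" "Y \<subseteq> fst F" "isomorphic ar A (induced F Y)"
proof -
  obtain f where "embedding ar A F f" "finite (fst A)" using assms unfolding age_def by blast
  then show thesis
    using that[of "f ` fst A"] embedding_imp_isomorphic_induced[of ar A F f]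
    by (auto simp: embedding_def)
qed

lemma induced_isomorphic_age:
  assumes "finite Y" "Y \<subseteq> fst F"
  obtains N where "N \<in> age ar F" "isomorphic ar N (induced F Y)"
proof -
  obtain h where h: "bij_betw h {..<card Y} Y"
    using ex_bij_betw_nat_finite[OF assms(1)] by (auto simp: atLeast0LessThan)
  define N :: "(nat, _) struct" where
    "N = ({..<card Y}, \<lambda>s xs. set xs \<subseteq> {..<card Y} \<and> length xs = ar s \<and> snd F s (map h xs))"
  have "embedding ar N F h"
    using h assms(2) unfolding embedding_def N_def preserves_def bij_betw_def by auto
  moreover have "isomorphic ar N (induced F Y)"
    using h unfolding isomorphic_def N_def preserves_def bij_betw_def by auto
  moreover have "wf_struct ar N" unfolding N_def wf_struct_def by auto
  ultimately show thesis using that[of N] unfolding age_def N_def by auto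
qed

lemma ramsey_class_age_iff:
  "ramsey_class ar (age ar F) \<longleftrightarrow>
    (\<forall>k \<ge> 1. \<forall>X Y. finite X \<and> X \<subseteq> fst F \<and> finite Y \<and> Y \<subseteq> fst F \<longrightarrow>
       (\<exists>D. finite D \<and> D \<subseteq> fst F \<and> arrows ar (induced F D) (induced F Y) (induced F X) k))"
  (is "_ \<longleftrightarrow> ?finite_arrows")
proof
  assume ramsey: "ramsey_class ar (age ar F)"
  show ?finite_arrows
  proof (intro allI impI, elim conjE)
    fix k :: nat and X Y assume "k \<ge> 1" "finite X" "X \<subseteq> fst F" "finite Y" "Y \<subseteq> fst F"
    moreover obtain A where A: "A \<in> age ar F" "isomorphic ar A (induced F X)"
      using induced_isomorphic_age \<open>finite X\<close> \<open>X \<subseteq> fst F\<close> by blast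
    moreover obtain B where B: "B \<in> age ar F" "isomorphic ar B (induced F Y)"
      using induced_isomorphic_age \<open>finite Y\<close> \<open>Y \<subseteq> fst F\<close> by blast
    ultimately obtain C where C: "C \<in> age ar F" "arrows ar C B A k"
      using ramsey unfolding ramsey_class_def by blast
    obtain D where D: "finite D" "D \<subseteq> fst F" "isomorphic ar C (induced F D)"
      using age_isomorphic_induced[OF C(1)] by blast
    have "arrows ar (induced F D) B A k"
      by (rule arrows_isomorphic[OF isomorphic_sym[OF D(3)] C(2)])
    then show "\<exists>D. finite D \<and> D \<subseteq> fst F \<and> arrows ar (induced F D) (induced F Y) (induced F X) k"
      using D arrows_isomorphic_cong[OF A(2) B(2)] by blast
  qed
next
  assume finite_arrows: ?finite_arrows
  show "ramsey_class ar (age ar F)"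
    unfolding ramsey_class_def
  proof (intro allI impI ballI)
    fix k :: nat and A B assume k: "k \<ge> 1" and "A \<in> age ar F" "B \<in> age ar F"
    then obtain X Y where X: "finite X" "X \<subseteq> fst F" and A: "isomorphic ar A (induced F X)"
      and Y: "finite Y" "Y \<subseteq> fst F" and B: "isomorphic ar B (induced F Y)"
      by (meson age_isomorphic_induced)
    obtain D where D: "finite D" "D \<subseteq> fst F"
      and "arrows ar (induced F D) (induced F Y) (induced F X) k"
      using finite_arrows k X Y by meson
    then have arr: "arrows ar (induced F D) B A k" using arrows_isomorphic_cong[OF A B] by blast
    obtain C where "C \<in> age ar F" "isomorphic ar C (induced F D)"
      using induced_isomorphic_age[OF D] by blast
    then show "\<exists>C\<in>age ar F. arrows ar C B A k" using arrows_isomorphic[OF _ arr] by blast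
  qed
qed

lemma strict_linear_order_automorphism_eq_id:
  assumes r: "strict_linear_order_on A r" and Z: "finite Z" "Z \<subseteq> A"
    and f: "bij_betw f Z Z" and f_mono: "\<And>x y. x \<in> Z \<Longrightarrow> y \<in> Z \<Longrightarrow> (f x, f y) \<in> r \<longleftrightarrow> (x, y) \<in> r"
    and x: "x \<in> Z"
  shows "f x = x"
proof -
  define rank where "rank y = card {z \<in> Z. (z, y) \<in> r}" for y
  have rank_f: "rank (f y) = rank y" if "y \<in> Z" for y
  proof -
    have "{z \<in> Z. (z, f y) \<in> r} \<subseteq> f ` {z \<in> Z. (z, y) \<in> r}"
    proof
      fix w assume w: "w \<in> {z \<in> Z. (z, f y) \<in> r}"
      then obtain z where "z \<in> Z" "w = f z" using f by (auto simp: bij_betw_def)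
      then show "w \<in> f ` {z \<in> Z. (z, y) \<in> r}" using w f_mono[of z y] that by auto
    qed
    moreover have "f ` {z \<in> Z. (z, y) \<in> r} \<subseteq> {z \<in> Z. (z, f y) \<in> r}"
      using f f_mono that by (auto simp: bij_betw_def)
    ultimately have "f ` {z \<in> Z. (z, y) \<in> r} = {z \<in> Z. (z, f y) \<in> r}" by blast
    moreover have "inj_on f {z \<in> Z. (z, y) \<in> r}"
      using f by (auto simp: bij_betw_def intro: inj_on_subset)
    ultimately show ?thesis unfolding rank_def using card_image by fastforce
  qed
  have rank_mono: "rank y < rank z" if "y \<in> Z" "z \<in> Z" "(y, z) \<in> r" for y z
  proof -
    have "{w \<in> Z. (w, y) \<in> r} \<subset> {w \<in> Z. (w, z) \<in> r}"
      using r that unfolding strict_linear_order_on_def irrefl_def trans_def by blast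
    then show ?thesis unfolding rank_def using Z(1) by (simp add: psubset_card_mono)
  qed
  have "f x \<in> Z" using f x by (auto simp: bij_betw_def)
  then show ?thesis
    using r Z(2) x rank_mono[OF x] rank_mono[of "f x" x] rank_f[OF x]
    unfolding strict_linear_order_on_def total_on_def by (metis less_irrefl subsetD)
qed

lemma bij_betw_factor_fst:
  assumes g: "bij_betw g X Y"
    and snd_eq: "\<And>p. p \<in> X \<Longrightarrow> snd (g p) = snd p"
    and fst_eq: "\<And>p q. p \<in> X \<Longrightarrow> q \<in> X \<Longrightarrow> fst (g p) = fst (g q) \<longleftrightarrow> fst p = fst q"
  obtains h where "bij_betw h (fst ` X) (fst ` Y)" "\<And>p. p \<in> X \<Longrightarrow> g p = map_prod h id p"
proof -
  define h where "h x = fst (g (SOME p. p \<in> X \<and> fst p = x))" for x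
  have h: "h (fst p) = fst (g p)" if "p \<in> X" for p
  proof -
    have "\<exists>q. q \<in> X \<and> fst q = fst p" using that by blast
    then have "(SOME q. q \<in> X \<and> fst q = fst p) \<in> X \<and> fst (SOME q. q \<in> X \<and> fst q = fst p) = fst p"
      by (rule someI_ex)
    then show ?thesis unfolding h_def using fst_eq that by blast
  qed
  then have g_eq: "g p = map_prod h id p" if "p \<in> X" for p
    using snd_eq that by (simp add: prod_eq_iff)
  have "inj_on h (fst ` X)"
    using h fst_eq by (auto simp: inj_on_def)
  moreover have "h ` fst ` X = fst ` Y"
    using g g_eq unfolding bij_betw_def by (force simp: image_image)
  ultimately show thesis using that g_eq by (auto simp: bij_betw_def)
qed

locale tournament_expansion =
  fixes ar :: "'s \<Rightarrow> nat" and E0 Lt :: 's and T :: "'a set" and E :: "'a \<Rightarrow> 'a \<Rightarrow> bool"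
    and Tstar :: "('a, 's) struct" and n :: nat
  assumes tournament: "tournament T E" and expansion: "is_expansion ar E0 Lt T E Tstar"
begin

abbreviation TIn :: "('a \<times> nat, 's + nat) struct" where
  "TIn \<equiv> blowup ar E0 Lt Tstar n"

abbreviation ar' :: "'s + nat \<Rightarrow> nat" where
  "ar' \<equiv> blowup_ar ar"

abbreviation lt :: "'a \<Rightarrow> 'a \<Rightarrow> bool" where
  "lt x y \<equiv> snd Tstar Lt [x, y]"

lemma fst_Tstar: "fst Tstar = T"
  and fst_TIn: "fst TIn = T \<times> {..<n}"
  and E0_neq_Lt: "E0 \<noteq> Lt"
  and ar_E0: "ar E0 = 2"
  and ar_Lt: "ar Lt = 2"
  and E0_iff: "x \<in> T \<Longrightarrow> y \<in> T \<Longrightarrow> snd Tstar E0 [x, y] \<longleftrightarrow> E x y"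
  and lt_order: "strict_linear_order_on T {(x, y). lt x y}"
  using expansion by (auto simp: is_expansion_def blowup_def)

lemma not_lt_refl: "\<not> lt x x"
  using lt_order by (auto simp: strict_linear_order_on_def irrefl_def)

lemma eq_iff_no_edge: "x \<in> T \<Longrightarrow> y \<in> T \<Longrightarrow> x = y \<longleftrightarrow> \<not> E x y \<and> \<not> E y x"
  using tournament unfolding tournament_def by blast

lemma TIn_Inr: "p \<in> T \<times> {..<n} \<Longrightarrow> snd TIn (Inr i) [p] \<longleftrightarrow> snd p = i"
  by (cases p) (auto simp: blowup_def fst_Tstar)

lemma TIn_Inl:
  "r \<noteq> Lt \<Longrightarrow> set ps \<subseteq> T \<times> {..<n} \<Longrightarrow>
    snd TIn (Inl r) ps \<longleftrightarrow> length ps = ar r \<and> snd Tstar r (map fst ps)"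
  by (auto simp: blowup_def fst_Tstar)

lemma TIn_E0:
  "p \<in> T \<times> {..<n} \<Longrightarrow> q \<in> T \<times> {..<n} \<Longrightarrow> snd TIn (Inl E0) [p, q] \<longleftrightarrow> E (fst p) (fst q)"
  using TIn_Inl[OF E0_neq_Lt, of "[p, q]"] by (auto simp: ar_E0 E0_iff)

lemma TIn_Lt:
  "p \<in> T \<times> {..<n} \<Longrightarrow> q \<in> T \<times> {..<n} \<Longrightarrow>
    snd TIn (Inl Lt) [p, q] \<longleftrightarrow> lt (fst p) (fst q) \<or> (fst p = fst q \<and> snd p < snd q)"
  using ar_Lt by (cases p; cases q) (auto simp: blowup_def fst_Tstar)

lemma preserves_TIn_snd_eq:
  assumes X: "X \<subseteq> T \<times> {..<n}" "g ` X \<subseteq> T \<times> {..<n}"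
    and g: "preserves ar' (induced TIn X) (induced TIn (g ` X)) g" and p: "p \<in> X"
  shows "snd (g p) = snd p"
proof -
  have "snd TIn (Inr (snd p)) [p] \<longleftrightarrow> snd TIn (Inr (snd p)) [g p]"
    using g p by (simp add: preserves_induced_iff)
  then show ?thesis using X p by (auto simp: TIn_Inr)
qed

lemma preserves_TIn_fst_eq:
  assumes X: "X \<subseteq> T \<times> {..<n}" "g ` X \<subseteq> T \<times> {..<n}"
    and g: "preserves ar' (induced TIn X) (induced TIn (g ` X)) g" and pq: "p \<in> X" "q \<in> X"
  shows "fst (g p) = fst (g q) \<longleftrightarrow> fst p = fst q"
proof -
  have "snd TIn (Inl E0) [p, q] \<longleftrightarrow> snd TIn (Inl E0) [g p, g q]"
    and "snd TIn (Inl E0) [q, p] \<longleftrightarrow> snd TIn (Inl E0) [g q, g p]"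
    using g pq ar_E0 by (simp_all add: preserves_induced_iff)
  moreover have "p \<in> T \<times> {..<n}" "q \<in> T \<times> {..<n}" "g p \<in> T \<times> {..<n}" "g q \<in> T \<times> {..<n}"
    using X pq by auto
  \<comment> \<open>same first coordinate iff no edge joins the two points, T being a tournament\<close>
  ultimately show ?thesis by (auto simp: TIn_E0 eq_iff_no_edge)
qed

lemma preserves_TIn_map_prod:
  assumes X: "X \<subseteq> T \<times> {..<n}" and h: "inj_on h (fst ` X)" "h ` fst ` X \<subseteq> T"
    and h_pres: "preserves ar (induced Tstar (fst ` X)) (induced Tstar (h ` fst ` X)) h"
  shows "preserves ar' (induced TIn X) (induced TIn (map_prod h id ` X)) (map_prod h id)"
proof -
  have h_rel: "snd Tstar r xs \<longleftrightarrow> snd Tstar r (map h xs)"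
    if "set xs \<subseteq> fst ` X" "length xs = ar r" for r xs
    using h_pres that by (simp add: preserves_induced_iff)
  have in_TIn: "p \<in> T \<times> {..<n}" "map_prod h id p \<in> T \<times> {..<n}" if "p \<in> X" for p
    using X h that by force+
  have "snd TIn s ps \<longleftrightarrow> snd TIn s (map (map_prod h id) ps)"
    if ps: "set ps \<subseteq> X" "length ps = ar' s" for s ps
  proof (cases s)
    case (Inr i)
    then obtain p where "ps = [p]" using ps(2) by (auto simp: length_Suc_conv)
    then show ?thesis using Inr ps(1) in_TIn by (simp add: TIn_Inr)
  next
    case (Inl r)
    show ?thesis
    proof (cases "r = Lt")
      case True
      then obtain p q where pq: "ps = [p, q]"
        using ps(2) Inl ar_Lt by (auto simp: numeral_2_eq_2 length_Suc_conv)
      then have "lt (h (fst p)) (h (fst q)) \<longleftrightarrow> lt (fst p) (fst q)"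
        using h_rel[of "[fst p, fst q]" Lt] ps(1) ar_Lt by auto
      moreover have "h (fst p) = h (fst q) \<longleftrightarrow> fst p = fst q"
        using h ps(1) pq by (auto simp: inj_on_def)
      ultimately show ?thesis using Inl True pq ps(1) in_TIn by (simp add: TIn_Lt)
    next
      case False
      have "set ps \<subseteq> T \<times> {..<n}" "set (map (map_prod h id) ps) \<subseteq> T \<times> {..<n}"
        using ps(1) in_TIn by auto
      moreover have "snd Tstar r (map fst ps) \<longleftrightarrow> snd Tstar r (map h (map fst ps))"
        by (rule h_rel) (use ps Inl in auto)
      ultimately show ?thesis using Inl False by (simp add: TIn_Inl)
    qed
  qed
  then show ?thesis by (simp add: preserves_induced_iff)
qed

lemma preserves_TIn_map_prod_dest:
  assumes X: "X \<subseteq> T \<times> {..<n}" and h: "inj_on h (fst ` X)" "h ` fst ` X \<subseteq> T"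
    and L_pres: "preserves ar' (induced TIn X) (induced TIn (map_prod h id ` X)) (map_prod h id)"
  shows "preserves ar (induced Tstar (fst ` X)) (induced Tstar (h ` fst ` X)) h"
proof -
  have "snd Tstar r xs \<longleftrightarrow> snd Tstar r (map h xs)"
    if xs: "set xs \<subseteq> fst ` X" "length xs = ar r" for r xs
  proof -
    have "xs \<in> lists (fst ` X)" using xs(1) by auto
    then have "xs \<in> map fst ` lists X" by (simp only: lists_image)
    then obtain ps where ps: "set ps \<subseteq> X" "xs = map fst ps" by (auto simp: lists_eq_set)
    have "snd TIn (Inl r) ps \<longleftrightarrow> snd TIn (Inl r) (map (map_prod h id) ps)"
      using L_pres ps xs(2) by (simp add: preserves_induced_iff)
    moreover have in_TIn: "set ps \<subseteq> T \<times> {..<n}" "set (map (map_prod h id) ps) \<subseteq> T \<times> {..<n}"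
      using X h ps(1) by force+
    show ?thesis
    proof (cases "r = Lt")
      case True
      then obtain p q where pq: "ps = [p, q]"
        using ps xs(2) ar_Lt by (auto simp: numeral_2_eq_2 length_Suc_conv)
      show ?thesis
      proof (cases "fst p = fst q")
        case True
        then show ?thesis using \<open>r = Lt\<close> pq ps(2) not_lt_refl by simp
      next
        case False
        then have "h (fst p) \<noteq> h (fst q)" using h ps(1) pq by (auto simp: inj_on_def)
        then show ?thesis
          using False \<open>r = Lt\<close> pq ps(2) in_TIn calculation by (simp add: TIn_Lt)
      qed
    next
      case False
      then show ?thesis using calculation in_TIn ps(2) xs(2) by (simp add: TIn_Inl)
    qed
  qed
  then show ?thesis using h(2) by (simp add: preserves_induced_iff)
qed

lemma isomorphic_TIn_iff:
  assumes X: "X \<subseteq> T \<times> {..<n}" and Y: "Y \<subseteq> T \<times> {..<n}"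
  shows "isomorphic ar' (induced TIn X) (induced TIn Y) \<longleftrightarrow>
    (\<exists>h. bij_betw h (fst ` X) (fst ` Y) \<and>
       preserves ar (induced Tstar (fst ` X)) (induced Tstar (fst ` Y)) h \<and>
       Y = map_prod h id ` X)"
proof
  assume "isomorphic ar' (induced TIn X) (induced TIn Y)"
  then obtain g where g: "bij_betw g X Y" "preserves ar' (induced TIn X) (induced TIn Y) g"
    by (auto simp: isomorphic_def)
  have gX: "g ` X = Y" using g(1) by (simp add: bij_betw_def)
  obtain h where h: "bij_betw h (fst ` X) (fst ` Y)" "\<And>p. p \<in> X \<Longrightarrow> g p = map_prod h id p"
    using bij_betw_factor_fst[OF g(1)] preserves_TIn_snd_eq preserves_TIn_fst_eq X Y g(2) gX
    by (metis (no_types, lifting))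
  have LX: "map_prod h id ` X = Y" using h(2) gX by (auto simp: image_iff)
  have fst_Y: "h ` fst ` X = fst ` Y" using h(1) by (simp add: bij_betw_def)
  have "preserves ar' (induced TIn X) (induced TIn (map_prod h id ` X)) (map_prod h id)"
    using g(2) h(2) LX preserves_cong[of "induced TIn X" g "map_prod h id"] by simp
  moreover have "h ` fst ` X \<subseteq> T" using fst_Y Y by auto
  ultimately have "preserves ar (induced Tstar (fst ` X)) (induced Tstar (h ` fst ` X)) h"
    using preserves_TIn_map_prod_dest[OF X] h(1) by (meson bij_betw_def)
  then have "preserves ar (induced Tstar (fst ` X)) (induced Tstar (fst ` Y)) h"
    by (simp only: fst_Y)
  with h(1) LX show "\<exists>h. bij_betw h (fst ` X) (fst ` Y) \<and>
      preserves ar (induced Tstar (fst ` X)) (induced Tstar (fst ` Y)) h \<and> Y = map_prod h id ` X"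
    by blast
next
  assume "\<exists>h. bij_betw h (fst ` X) (fst ` Y) \<and>
    preserves ar (induced Tstar (fst ` X)) (induced Tstar (fst ` Y)) h \<and> Y = map_prod h id ` X"
  then obtain h where h: "bij_betw h (fst ` X) (fst ` Y)"
    and h_pres: "preserves ar (induced Tstar (fst ` X)) (induced Tstar (fst ` Y)) h"
    and LX: "Y = map_prod h id ` X" by blast
  have fst_Y: "h ` fst ` X = fst ` Y" using h by (simp add: bij_betw_def)
  have "h ` fst ` X \<subseteq> T" using fst_Y Y by auto
  then have "preserves ar' (induced TIn X) (induced TIn Y) (map_prod h id)"
    unfolding LX using preserves_TIn_map_prod[OF X] h h_pres fst_Y by (metis bij_betw_def)
  moreover have "inj_on (map_prod h id) X"
    using h by (auto simp: inj_on_def bij_betw_def prod_eq_iff)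
  ultimately show "isomorphic ar' (induced TIn X) (induced TIn Y)"
    unfolding isomorphic_def using LX by (auto simp: bij_betw_def)
qed

lemma isomorphic_TIn_imp_isomorphic_fst:
  assumes "X \<subseteq> T \<times> {..<n}" "Y \<subseteq> T \<times> {..<n}" "isomorphic ar' (induced TIn X) (induced TIn Y)"
  shows "isomorphic ar (induced Tstar (fst ` X)) (induced Tstar (fst ` Y))"
  using assms(3) unfolding isomorphic_TIn_iff[OF assms(1,2)] by (auto simp: isomorphic_def)

lemma isomorphic_TIn_fst_eq_imp_eq:
  assumes X: "X \<subseteq> T \<times> {..<n}" "finite X" and Y: "Y \<subseteq> T \<times> {..<n}"
    and fst_eq: "fst ` X = fst ` Y" and iso: "isomorphic ar' (induced TIn X) (induced TIn Y)"
  shows "X = Y"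
proof -
  obtain h where h: "bij_betw h (fst ` X) (fst ` X)"
    and h_pres: "preserves ar (induced Tstar (fst ` X)) (induced Tstar (fst ` X)) h"
    and LX: "Y = map_prod h id ` X"
    using iso X Y fst_eq by (auto simp: isomorphic_TIn_iff)
  have h_mono: "(h x, h y) \<in> {(x, y). lt x y} \<longleftrightarrow> (x, y) \<in> {(x, y). lt x y}"
    if "x \<in> fst ` X" "y \<in> fst ` X" for x y
    using h h_pres that ar_Lt by (auto simp: preserves_induced_iff bij_betw_def)
  have "finite (fst ` X)" "fst ` X \<subseteq> T" using X by auto
  then have "h x = x" if "x \<in> fst ` X" for x
    by (rule strict_linear_order_automorphism_eq_id[OF lt_order _ _ h h_mono that])
  then have "map_prod h id p = p" if "p \<in> X" for p using that by (simp add: prod_eq_iff)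
  then show ?thesis using LX by (simp cong: image_cong)
qed

lemma isomorphic_fst_imp_isomorphic_TIn:
  assumes Z: "Z \<subseteq> T" and Y: "Y \<subseteq> T \<times> {..<n}"
    and iso: "isomorphic ar (induced Tstar Z) (induced Tstar (fst ` Y))"
  obtains W where "W \<subseteq> Z \<times> {..<n}" "fst ` W = Z"
    "isomorphic ar' (induced TIn W) (induced TIn Y)"
proof -
  obtain h where h: "bij_betw h (fst ` Y) Z"
    and h_pres: "preserves ar (induced Tstar (fst ` Y)) (induced Tstar Z) h"
    using isomorphic_sym[OF iso] by (auto simp: isomorphic_def)
  define W where "W = map_prod h id ` Y"
  have fst_W: "fst ` W = Z" using h by (force simp: W_def bij_betw_def image_image)
  moreover have "W \<subseteq> Z \<times> {..<n}" using fst_W Y by (force simp: W_def)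
  moreover have "isomorphic ar' (induced TIn Y) (induced TIn W)"
  proof (subst isomorphic_TIn_iff)
    show "W \<subseteq> T \<times> {..<n}" using \<open>W \<subseteq> Z \<times> {..<n}\<close> Z by auto
  qed (use Y h h_pres fst_W in \<open>auto simp: W_def\<close>)
  ultimately show thesis using that isomorphic_sym by blast
qed

lemma arrows_TIn:
  assumes D: "finite D" "D \<subseteq> T" and X: "X \<subseteq> T \<times> {..<n}" and Y: "Y \<subseteq> T \<times> {..<n}"
    and arr: "arrows ar (induced Tstar D) (induced Tstar (fst ` Y)) (induced Tstar (fst ` X)) k"
  shows "arrows ar' (induced TIn (D \<times> {..<n})) (induced TIn Y) (induced TIn X) k"
proof (rule arrows_transfer[OF arr, where p = fst], unfold copies_induced mem_Collect_eq)
  have lift: "\<exists>W. W \<subseteq> D \<times> {..<n} \<and> isomorphic ar' (induced TIn W) (induced TIn V) \<and> fst ` W = Z"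
    if "V \<subseteq> T \<times> {..<n}" "Z \<subseteq> D \<and> isomorphic ar (induced Tstar Z) (induced Tstar (fst ` V))"
    for V Z
    using isomorphic_fst_imp_isomorphic_TIn[of Z V] that D by (metis order_trans subset_refl Sigma_mono)
  show "\<exists>W \<in> {W. W \<subseteq> D \<times> {..<n} \<and> isomorphic ar' (induced TIn W) (induced TIn X)}. fst ` W = Z"
    if "Z \<subseteq> D \<and> isomorphic ar (induced Tstar Z) (induced Tstar (fst ` X))" for Z
    using lift[OF X that] by blast
  show "\<exists>W \<in> {W. W \<subseteq> D \<times> {..<n} \<and> isomorphic ar' (induced TIn W) (induced TIn Y)}. fst ` W \<subseteq> Z"
    if "Z \<subseteq> D \<and> isomorphic ar (induced Tstar Z) (induced Tstar (fst ` Y))" for Z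
    using lift[OF Y that] by blast
  show "fst ` W \<subseteq> D \<and> isomorphic ar (induced Tstar (fst ` W)) (induced Tstar (fst ` X))"
    if "W \<subseteq> D \<times> {..<n} \<and> isomorphic ar' (induced TIn W) (induced TIn X)" for W
    using that D X isomorphic_TIn_imp_isomorphic_fst[of W X] by auto
  show "W = W'"
    if "W \<subseteq> D \<times> {..<n} \<and> isomorphic ar' (induced TIn W) (induced TIn X)"
      and "W' \<subseteq> D \<times> {..<n} \<and> isomorphic ar' (induced TIn W') (induced TIn X)"
      and "fst ` W = fst ` W'" for W W'
    using that D finite_subset[of W "D \<times> {..<n}"]
    by (intro isomorphic_TIn_fst_eq_imp_eq) (auto intro: isomorphic_trans isomorphic_sym)
qed

end

theorem theorem4p2:
  fixes ar :: "'s::countable \<Rightarrow> nat"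
    and E0 Lt :: 's
    and T :: "'a set"
    and E :: "'a \<Rightarrow> 'a \<Rightarrow> bool"
    and Tstar :: "('a, 's) struct"
    and n :: nat
  assumes "countable_homogeneous_tournament T E"
    and "is_expansion ar E0 Lt T E Tstar"
    and "ramsey_class ar (age ar Tstar)"
    and "n \<ge> 1"
  shows "ramsey_class (blowup_ar ar) (age (blowup_ar ar) (blowup ar E0 Lt Tstar n))"
proof -
  interpret tournament_expansion ar E0 Lt T E Tstar n
    using assms(1,2) by unfold_locales (auto simp: countable_homogeneous_tournament_def)
  show ?thesis
    unfolding ramsey_class_age_iff fst_TIn
  proof (intro allI impI, elim conjE)
    fix k :: nat and X Y
    assume k: "k \<ge> 1" and X: "finite X" "X \<subseteq> T \<times> {..<n}" and Y: "finite Y" "Y \<subseteq> T \<times> {..<n}"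
    then have "finite (fst ` X)" "fst ` X \<subseteq> fst Tstar" "finite (fst ` Y)" "fst ` Y \<subseteq> fst Tstar"
      by (auto simp: fst_Tstar)
    then obtain D where D: "finite D" "D \<subseteq> T"
      and "arrows ar (induced Tstar D) (induced Tstar (fst ` Y)) (induced Tstar (fst ` X)) k"
      using assms(3) k unfolding ramsey_class_age_iff fst_Tstar by meson
    then have "arrows ar' (induced TIn (D \<times> {..<n})) (induced TIn Y) (induced TIn X) k"
      using X Y by (intro arrows_TIn) auto
    then show "\<exists>D'. finite D' \<and> D' \<subseteq> T \<times> {..<n} \<and>
        arrows ar' (induced TIn D') (induced TIn Y) (induced TIn X) k"
      using D by (intro exI[of _ "D \<times> {..<n}"]) auto
  qed
qed

end
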